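(* Pareto-RR restricted to instances with a single place ($m=1$) and no lower quotas is solvable in polynomial time.
   Context: An instance of Refugee Resettlement (RR) consists of a set $F$ of families, a set $P=\{p_1,\dots,p_m\}$ of places, a set $S$ of $t$ services, a requirement vector $\boldsymbol{r}_i\in\mathbb{N}^t$ for each family, and lower and upper quota vectors $\underline{\boldsymbol{c}}_j,\bar{\boldsymbol{c}}_j\in\mathbb{N}^t$ for each place. An assignment is $\sigma\colon F\to P\cup\{\bot\}$ ($\bot$ = unassigned); the load of $p_j$ is $\sum_{f_i:\sigma(f_i)=p_j}\boldsymbol{r}_i$; $\sigma$ is feasible if $\underline{\boldsymbol{c}}_j\le$ load $\le\bar{\boldsymbol{c}}_j$ coordinatewise for all $p_j$. No lower quotas: all $\underline{\boldsymbol{c}}_j$ zero. Pareto-RR: each family has a weak order $\succeq_i$ over the places it finds acceptable, preferring each acceptable place to $\bot$; an assignment is acceptable if every family is unassigned or at an acceptable place; a feasible acceptable $\sigma$ is Pareto-optimal if no feasible acceptable $\sigma'$ satisfies $\sigma'(f_i)\succeq_i\sigma(f_i)$ for all families with strict preference for some family. Task: find a feasible acceptable Pareto-optimal assignment or report that none exists. *)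

theory Defs
  imports Main
begin

text \<open>Families are indexed 0..<n, places 0..<m (p_1 is index 0), services 0..<t.
  An assignment maps a family to Some j (place j) or None (unassigned, bottom).\<close>

record pareto_rr =
  nfam :: nat
  nplace :: nat
  nserv :: nat
  req :: "nat \<Rightarrow> nat \<Rightarrow> nat"      \<comment> \<open>req i s: requirement of family i for service s\<close>
  lowq :: "nat \<Rightarrow> nat \<Rightarrow> nat"     \<comment> \<open>lowq j s: lower quota of place j for service s\<close>
  upq :: "nat \<Rightarrow> nat \<Rightarrow> nat"      \<comment> \<open>upq j s: upper quota of place j for service s\<close>
  acc :: "nat \<Rightarrow> nat \<Rightarrow> bool"     \<comment> \<open>acc i j: family i finds place j acceptable\<close>
  pref :: "nat \<Rightarrow> nat \<Rightarrow> nat \<Rightarrow> bool" \<comment> \<open>pref i j k: j weakly preferred to k by family i\<close>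

type_synonym assignment = "nat \<Rightarrow> nat option"

definition load :: "pareto_rr \<Rightarrow> assignment \<Rightarrow> nat \<Rightarrow> nat \<Rightarrow> nat" where
  "load I \<sigma> j s = (\<Sum>i\<in>{i. i < nfam I \<and> \<sigma> i = Some j}. req I i s)"

definition feasible :: "pareto_rr \<Rightarrow> assignment \<Rightarrow> bool" where
  "feasible I \<sigma> \<longleftrightarrow>
     (\<forall>i < nfam I. \<forall>j. \<sigma> i = Some j \<longrightarrow> j < nplace I) \<and>
     (\<forall>j < nplace I. \<forall>s < nserv I. lowq I j s \<le> load I \<sigma> j s \<and> load I \<sigma> j s \<le> upq I j s)"

definition acceptable :: "pareto_rr \<Rightarrow> assignment \<Rightarrow> bool" where
  "acceptable I \<sigma> \<longleftrightarrow> (\<forall>i < nfam I. \<forall>j. \<sigma> i = Some j \<longrightarrow> acc I i j)"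

fun weakly_prefers :: "pareto_rr \<Rightarrow> nat \<Rightarrow> nat option \<Rightarrow> nat option \<Rightarrow> bool" where
  "weakly_prefers I i None None = True"
| "weakly_prefers I i (Some j) None = acc I i j"
| "weakly_prefers I i None (Some k) = (\<not> acc I i k)"
| "weakly_prefers I i (Some j) (Some k) = pref I i j k"

definition strictly_prefers :: "pareto_rr \<Rightarrow> nat \<Rightarrow> nat option \<Rightarrow> nat option \<Rightarrow> bool" where
  "strictly_prefers I i x y \<longleftrightarrow> weakly_prefers I i x y \<and> \<not> weakly_prefers I i y x"

definition pareto_optimal :: "pareto_rr \<Rightarrow> assignment \<Rightarrow> bool" where
  "pareto_optimal I \<sigma> \<longleftrightarrow> feasible I \<sigma> \<and> acceptable I \<sigma> \<and>
     \<not> (\<exists>\<sigma>'. feasible I \<sigma>' \<and> acceptable I \<sigma>' \<and>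
            (\<forall>i < nfam I. weakly_prefers I i (\<sigma>' i) (\<sigma> i)) \<and>
            (\<exists>i < nfam I. strictly_prefers I i (\<sigma>' i) (\<sigma> i)))"

text \<open>An instance with m = 1 and zero lower quotas is encoded as a list of families,
  each given by (p_1 acceptable?, requirement vector), together with the upper quota
  vector of p_1. The only weak order on the single place p_1 is the reflexive one.\<close>

definition wf_input :: "(bool \<times> nat list) list \<Rightarrow> nat list \<Rightarrow> bool" where
  "wf_input fams cap \<longleftrightarrow> (\<forall>f \<in> set fams. length (snd f) = length cap)"

definition decode_instance :: "(bool \<times> nat list) list \<Rightarrow> nat list \<Rightarrow> pareto_rr" where
  "decode_instance fams cap =
     \<lparr> nfam = length fams, nplace = 1, nserv = length cap,
       req = (\<lambda>i s. snd (fams ! i) ! s),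
       lowq = (\<lambda>j s. 0),
       upq = (\<lambda>j s. cap ! s),
       acc = (\<lambda>i j. j = 0 \<and> fst (fams ! i)),
       pref = (\<lambda>i j k. True) \<rparr>"

definition decode_assignment :: "bool list \<Rightarrow> assignment" where
  "decode_assignment xs = (\<lambda>i. if i < length xs \<and> xs ! i then Some 0 else None)"

text \<open>Size of the encoded input: number of numbers/flags it contains.\<close>
definition input_size :: "(bool \<times> nat list) list \<Rightarrow> nat list \<Rightarrow> nat" where
  "input_size fams cap = length cap + (\<Sum>f\<leftarrow>fams. length (snd f) + 1)"

fun fits :: "nat list \<Rightarrow> nat list \<Rightarrow> bool" where
  "fits [] [] = True"
| "fits (r # rs) (c # cs) = (if r \<le> c then fits rs cs else False)"
| "fits _ _ = False"

fun subtr :: "nat list \<Rightarrow> nat list \<Rightarrow> nat list" where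
  "subtr (c # cs) (r # rs) = (c - r) # subtr cs rs"
| "subtr _ _ = []"

fun greedy :: "nat list \<Rightarrow> (bool \<times> nat list) list \<Rightarrow> bool list" where
  "greedy cap [] = []"
| "greedy cap ((a, r) # fs) =
     (if a then (if fits r cap then True # greedy (subtr cap r) fs else False # greedy cap fs)
      else False # greedy cap fs)"

definition solve :: "(bool \<times> nat list) list \<Rightarrow> nat list \<Rightarrow> bool list option" where
  "solve fams cap = Some (greedy cap fams)"

text \<open>Running-time functions, written by hand following the convention of HOL-Library's
  time_fun command (unit cost per function call; primitive operations on nat/bool free;
  a call costs 1 plus the time of the calls it makes).\<close>

fun T_fits :: "nat list \<Rightarrow> nat list \<Rightarrow> nat" where
  "T_fits [] [] = 1"
| "T_fits (r # rs) (c # cs) = (if r \<le> c then T_fits rs cs else 0) + 1"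
| "T_fits _ _ = 1"

fun T_subtr :: "nat list \<Rightarrow> nat list \<Rightarrow> nat" where
  "T_subtr (c # cs) (r # rs) = T_subtr cs rs + 1"
| "T_subtr _ _ = 1"

fun T_greedy :: "nat list \<Rightarrow> (bool \<times> nat list) list \<Rightarrow> nat" where
  "T_greedy cap [] = 1"
| "T_greedy cap ((a, r) # fs) =
     (if a then T_fits r cap + (if fits r cap then T_subtr cap r + T_greedy (subtr cap r) fs
                                 else T_greedy cap fs)
      else T_greedy cap fs) + 1"

definition T_solve :: "(bool \<times> nat list) list \<Rightarrow> nat list \<Rightarrow> nat" where
  "T_solve fams cap = T_greedy cap fams + 1"

end

theory Submission
  imports Defs
begin

text \<open>With a single place and no lower quotas every family is indifferent among the outcomes
  it can get except for being placed versus not, so an assignment is Pareto-optimal exactly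
  when its set of placed families consists of acceptable families, fits into the upper quota,
  and cannot be enlarged by any further acceptable family: a Pareto improvement must keep
  every placed family and place one more. Scanning the families once and placing each
  acceptable family that still fits into the residual quota produces such an inclusion-maximal
  set, since a family rejected by the scan does not even fit next to the families placed
  before it. The scan makes linearly many unit-cost calls.\<close>

lemma fits_iff: "fits r c \<longleftrightarrow> length r = length c \<and> (\<forall>s<length c. r ! s \<le> c ! s)"
  by (induction r c rule: fits.induct) (auto simp: nth_Cons split: nat.splits)

lemma length_subtr: "length (subtr c r) = min (length c) (length r)"
  by (induction c r rule: subtr.induct) auto

lemma nth_subtr: "s < length c \<Longrightarrow> s < length r \<Longrightarrow> subtr c r ! s = c ! s - r ! s"
  by (induction c r arbitrary: s rule: subtr.induct) (auto simp: nth_Cons split: nat.splits)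

definition selected :: "bool list \<Rightarrow> nat set" where
  "selected xs = {i. i < length xs \<and> xs ! i}"

definition selected_load :: "bool list \<Rightarrow> (bool \<times> nat list) list \<Rightarrow> nat \<Rightarrow> nat" where
  "selected_load xs fams s = (\<Sum>i\<in>selected xs. snd (fams ! i) ! s)"

lemma finite_selected [simp]: "finite (selected xs)"
  unfolding selected_def by simp

lemma selected_Nil [simp]: "selected [] = {}"
  by (simp add: selected_def)

lemma selected_Cons: "selected (x # xs) = (if x then {0} else {}) \<union> Suc ` selected xs"
proof (rule set_eqI)
  show "i \<in> selected (x # xs) \<longleftrightarrow> i \<in> (if x then {0} else {}) \<union> Suc ` selected xs" for i
    by (cases i) (auto simp: selected_def)
qed

lemma selected_load_Cons:
  "selected_load (x # xs) (f # fams) s = (if x then snd f ! s else 0) + selected_load xs fams s"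
  by (simp add: selected_load_def selected_Cons sum.reindex)

definition maximal_selection :: "(bool \<times> nat list) list \<Rightarrow> nat list \<Rightarrow> bool list \<Rightarrow> bool" where
  "maximal_selection fams cap xs \<longleftrightarrow>
     length xs = length fams \<and>
     (\<forall>i\<in>selected xs. fst (fams ! i)) \<and>
     (\<forall>s<length cap. selected_load xs fams s \<le> cap ! s) \<and>
     (\<forall>i<length fams. fst (fams ! i) \<and> i \<notin> selected xs \<longrightarrow>
        (\<exists>s<length cap. cap ! s < selected_load xs fams s + snd (fams ! i) ! s))"

lemma length_greedy [simp]: "length (greedy cap fams) = length fams"
  by (induction cap fams rule: greedy.induct) auto

lemma greedy_selects_acceptable: "i \<in> selected (greedy cap fams) \<Longrightarrow> fst (fams ! i)"
  by (induction cap fams arbitrary: i rule: greedy.induct) (auto simp: selected_Cons split: if_splits)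

lemma wf_input_Cons: "wf_input ((a, r) # fs) cap \<longleftrightarrow> length r = length cap \<and> wf_input fs cap"
  by (simp add: wf_input_def)

lemma wf_input_subtr: "wf_input fs cap \<Longrightarrow> length r = length cap \<Longrightarrow> wf_input fs (subtr cap r)"
  by (simp add: wf_input_def length_subtr)

lemma selected_load_greedy_le:
  "wf_input fams cap \<Longrightarrow> s < length cap \<Longrightarrow> selected_load (greedy cap fams) fams s \<le> cap ! s"
proof (induction cap fams rule: greedy.induct)
  case (1 cap)
  then show ?case by (simp add: selected_load_def)
next
  case (2 cap a r fs)
  then have r: "length r = length cap" and wf: "wf_input fs cap"
    by (simp_all add: wf_input_Cons)
  show ?case
  proof (cases "a \<and> fits r cap")
    case True
    then have "r ! s \<le> cap ! s" using 2 by (simp add: fits_iff)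
    moreover have "selected_load (greedy (subtr cap r) fs) fs s \<le> cap ! s - r ! s"
      using "2.IH"(1)[OF _ _ wf_input_subtr[OF wf r]] True "2.prems"(2) r
      by (simp add: length_subtr nth_subtr)
    ultimately show ?thesis using True by (simp add: selected_load_Cons)
  next
    case False
    then show ?thesis using 2 wf by (auto simp: selected_load_Cons)
  qed
qed

lemma greedy_rejects_only_misfits:
  assumes "wf_input fams cap" "i < length fams" "fst (fams ! i)" "i \<notin> selected (greedy cap fams)"
  shows "\<exists>s<length cap. cap ! s < selected_load (greedy cap fams) fams s + snd (fams ! i) ! s"
  using assms
proof (induction cap fams arbitrary: i rule: greedy.induct)
  case (1 cap)
  then show ?case by simp
next
  case (2 cap a r fs)
  then have r: "length r = length cap" and wf: "wf_input fs cap"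
    by (simp_all add: wf_input_Cons)
  show ?case
  proof (cases i)
    case 0
    with 2 have "\<not> fits r cap" by (auto simp: selected_Cons)
    then obtain s where "s < length cap" "cap ! s < r ! s"
      using r by (auto simp: fits_iff not_le)
    then show ?thesis using 0 "2.prems" by (auto simp: selected_load_Cons selected_Cons)
  next
    case (Suc i')
    then have i': "i' < length fs" "fst (fs ! i')" using "2.prems" by simp_all
    show ?thesis
    proof (cases "a \<and> fits r cap")
      case True
      have "i' \<notin> selected (greedy (subtr cap r) fs)"
        using "2.prems"(4) True Suc by (auto simp: selected_Cons)
      then obtain s where s: "s < length cap"
        "cap ! s - r ! s < selected_load (greedy (subtr cap r) fs) fs s + snd (fs ! i') ! s"
        using "2.IH"(1)[OF _ _ wf_input_subtr[OF wf r] i'] True r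
        by (auto simp: length_subtr nth_subtr)
      then show ?thesis using True Suc by (auto simp: selected_load_Cons)
    next
      case False
      then have "i' \<notin> selected (greedy cap fs)"
        using "2.prems"(4) Suc by (auto simp: selected_Cons split: if_splits)
      then show ?thesis
        using "2.IH"(2)[OF _ _ wf i'] "2.IH"(3)[OF _ wf i'] False Suc by (auto simp: selected_load_Cons)
    qed
  qed
qed

lemma maximal_selection_greedy:
  "wf_input fams cap \<Longrightarrow> maximal_selection fams cap (greedy cap fams)"
  unfolding maximal_selection_def
  using greedy_selects_acceptable selected_load_greedy_le greedy_rejects_only_misfits by simp

lemma decode_instance_simps [simp]:
  "nfam (decode_instance fams cap) = length fams"
  "nplace (decode_instance fams cap) = 1"
  "nserv (decode_instance fams cap) = length cap"
  "req (decode_instance fams cap) i s = snd (fams ! i) ! s"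
  "lowq (decode_instance fams cap) j s = 0"
  "upq (decode_instance fams cap) j s = cap ! s"
  "acc (decode_instance fams cap) i j \<longleftrightarrow> j = 0 \<and> fst (fams ! i)"
  "pref (decode_instance fams cap) i j k"
  by (simp_all add: decode_instance_def)

lemma decode_assignment_selected:
  "decode_assignment xs i = (if i \<in> selected xs then Some 0 else None)"
  by (simp add: decode_assignment_def selected_def)

lemma load_decode_assignment:
  assumes "length xs = length fams"
  shows "load (decode_instance fams cap) (decode_assignment xs) 0 s = selected_load xs fams s"
proof -
  have "{i. i < nfam (decode_instance fams cap) \<and> decode_assignment xs i = Some 0} = selected xs"
    using assms by (auto simp: decode_assignment_selected selected_def)
  then show ?thesis
    by (simp add: load_def selected_load_def)
qed

lemma feasible_decode_instance_place:
  "feasible (decode_instance fams cap) \<sigma> \<Longrightarrow> i < length fams \<Longrightarrow> \<sigma> i = Some j \<Longrightarrow> j = 0"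
  by (auto simp: feasible_def)

lemma pareto_improvement_adds_family:
  assumes len: "length xs = length fams"
    and acc: "\<And>j. j \<in> selected xs \<Longrightarrow> fst (fams ! j)"
    and feasible: "feasible (decode_instance fams cap) \<sigma>'"
    and weak: "\<And>j. j < length fams \<Longrightarrow>
      weakly_prefers (decode_instance fams cap) j (\<sigma>' j) (decode_assignment xs j)"
    and i: "i < length fams"
    and strict: "strictly_prefers (decode_instance fams cap) i (\<sigma>' i) (decode_assignment xs i)"
  shows "i \<notin> selected xs" and "fst (fams ! i)"
    and "selected_load xs fams s + snd (fams ! i) ! s \<le> load (decode_instance fams cap) \<sigma>' 0 s"
proof -
  have kept: "\<sigma>' j = Some 0" if "j \<in> selected xs" for j
  proof -
    have "j < length fams" "decode_assignment xs j = Some 0"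
      using that len by (simp_all add: selected_def decode_assignment_selected)
    then show ?thesis
      using weak[of j] feasible_decode_instance_place[OF feasible, of j] acc[OF that]
      by (cases "\<sigma>' j") auto
  qed
  show new: "i \<notin> selected xs"
    using strict kept by (auto simp: strictly_prefers_def decode_assignment_selected)
  then have placed: "\<sigma>' i = Some 0 \<and> fst (fams ! i)"
    using strict feasible_decode_instance_place[OF feasible i]
    by (cases "\<sigma>' i") (auto simp: strictly_prefers_def decode_assignment_selected)
  then show "fst (fams ! i)" ..
  have "selected_load xs fams s + snd (fams ! i) ! s = (\<Sum>j\<in>insert i (selected xs). snd (fams ! j) ! s)"
    using new by (simp add: selected_load_def)
  also have "\<dots> \<le> load (decode_instance fams cap) \<sigma>' 0 s"
    unfolding load_def decode_instance_simps using placed i kept len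
    by (intro sum_mono2) (auto simp: selected_def)
  finally show "selected_load xs fams s + snd (fams ! i) ! s \<le> load (decode_instance fams cap) \<sigma>' 0 s" .
qed

lemma pareto_optimal_if_maximal_selection:
  assumes "maximal_selection fams cap xs"
  shows "pareto_optimal (decode_instance fams cap) (decode_assignment xs)"
proof -
  let ?I = "decode_instance fams cap" and ?\<sigma> = "decode_assignment xs"
  have len: "length xs = length fams"
    and acc: "\<And>i. i \<in> selected xs \<Longrightarrow> fst (fams ! i)"
    and fit: "\<And>s. s < length cap \<Longrightarrow> selected_load xs fams s \<le> cap ! s"
    and maximal: "\<And>i. i < length fams \<Longrightarrow> fst (fams ! i) \<Longrightarrow> i \<notin> selected xs \<Longrightarrow>
        \<exists>s<length cap. cap ! s < selected_load xs fams s + snd (fams ! i) ! s"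
    using assms by (auto simp: maximal_selection_def)
  have "feasible ?I ?\<sigma>"
    using fit by (auto simp: feasible_def decode_assignment_selected load_decode_assignment[OF len])
  moreover have "acceptable ?I ?\<sigma>"
    using acc by (auto simp: acceptable_def decode_assignment_selected)
  moreover have False if feasible: "feasible ?I \<sigma>'"
    and weak: "\<forall>j < nfam ?I. weakly_prefers ?I j (\<sigma>' j) (?\<sigma> j)"
    and i: "i < nfam ?I" and strict: "strictly_prefers ?I i (\<sigma>' i) (?\<sigma> i)" for \<sigma>' i
  proof -
    have weak': "\<And>j. j < length fams \<Longrightarrow> weakly_prefers ?I j (\<sigma>' j) (?\<sigma> j)"
      using weak by simp
    have i': "i < length fams"
      using i by simp
    note improvement = pareto_improvement_adds_family[OF len acc feasible weak' i' strict]
    obtain s where s: "s < length cap" "cap ! s < selected_load xs fams s + snd (fams ! i) ! s"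
      using maximal[OF i' improvement(2,1)] by blast
    have "load ?I \<sigma>' 0 s \<le> cap ! s"
      using feasible s(1) by (simp add: feasible_def)
    then show False
      using improvement(3)[of s] s(2) by linarith
  qed
  ultimately show ?thesis by (auto simp: pareto_optimal_def)
qed

lemma T_fits_le: "T_fits r c \<le> length r + 1"
  by (induction r c rule: T_fits.induct) auto

lemma T_subtr_le: "T_subtr c r \<le> length r + 1"
  by (induction c r rule: T_subtr.induct) auto

lemma T_greedy_le: "T_greedy cap fams \<le> 1 + 3 * (\<Sum>f\<leftarrow>fams. length (snd f) + 1)"
proof (induction cap fams rule: greedy.induct)
  case (2 cap a r fs)
  then show ?case using T_fits_le[of r cap] T_subtr_le[of cap r] by auto
qed simp

theorem proposition12:
  "\<exists>c k :: nat. \<forall>fams cap. wf_input fams cap \<longrightarrow>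
     (case solve fams cap of
        None \<Rightarrow> \<not> (\<exists>\<sigma>. pareto_optimal (decode_instance fams cap) \<sigma>)
      | Some xs \<Rightarrow> length xs = length fams \<and>
                   pareto_optimal (decode_instance fams cap) (decode_assignment xs)) \<and>
     T_solve fams cap \<le> c * (input_size fams cap + 1) ^ k"
proof (intro exI allI impI conjI)
  fix fams cap
  assume "wf_input fams cap"
  then have "pareto_optimal (decode_instance fams cap) (decode_assignment (greedy cap fams))"
    by (intro pareto_optimal_if_maximal_selection maximal_selection_greedy)
  then show "case solve fams cap of
        None \<Rightarrow> \<not> (\<exists>\<sigma>. pareto_optimal (decode_instance fams cap) \<sigma>)
      | Some xs \<Rightarrow> length xs = length fams \<and>
                   pareto_optimal (decode_instance fams cap) (decode_assignment xs)"
    by (simp add: solve_def)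
  show "T_solve fams cap \<le> 3 * (input_size fams cap + 1) ^ 1"
    using T_greedy_le[of cap fams] by (simp add: T_solve_def input_size_def)
qed

end
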